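(* In $NOM$, for every finite sequence $\Gamma$ of formulas and all formulas $\phi,\psi$, the following rule is derivable: from $\Gamma\vdash\psi$ and $\Gamma,\phi\vdash\psi$ infer $\Gamma,\neg\phi\vdash\psi$.
   Context: The propositional deductive system $NOM$: formulas are built from propositional letters using $\wedge$, $\rightarrow$, $\neg$. Sequents are $\phi_1,\ldots,\phi_n\vdash\psi$ ($n\ge0$) with antecedent a finite ordered sequence. With $\Gamma$ a finite possibly empty sequence of formulas and $\phi,\psi,\chi$ formulas, the rules of $NOM$ are: (assumption) $\Gamma,\phi\vdash\phi$; (cut) $\Gamma\vdash\phi$, $\Gamma,\phi\vdash\psi$ $\Rightarrow$ $\Gamma\vdash\psi$; (paste) $\Gamma\vdash\phi$, $\Gamma\vdash\psi$ $\Rightarrow$ $\Gamma,\phi\vdash\psi$; (compatible exchange) $\Gamma,\phi,\psi\vdash\phi$, $\Gamma,\phi,\psi\vdash\chi$, $\Gamma,\psi,\phi\vdash\psi$ $\Rightarrow$ $\Gamma,\psi,\phi\vdash\chi$; ($\wedge$-intro) $\Gamma\vdash\phi$, $\Gamma\vdash\psi$ $\Rightarrow$ $\Gamma\vdash\phi\wedge\psi$; ($\wedge$-elim) $\Gamma\vdash\phi\wedge\psi$ $\Rightarrow$ $\Gamma\vdash\phi$ and $\Rightarrow$ $\Gamma\vdash\psi$; ($\rightarrow$-intro) $\Gamma,\phi\vdash\psi$ $\Rightarrow$ $\Gamma\vdash\phi\rightarrow\psi$; ($\rightarrow$-elim) $\Gamma\vdash\phi\rightarrow\psi$ $\Rightarrow$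 $\Gamma,\phi\vdash\psi$; (excluded middle) $\Gamma,\phi\vdash\psi$, $\Gamma,\neg\phi\vdash\psi$ $\Rightarrow$ $\Gamma\vdash\psi$; (explosion) $\Gamma\vdash\neg\phi$ $\Rightarrow$ $\Gamma,\phi\vdash\psi$. A rule schema is derivable if in every instance its conclusion can be derived from its premises using these rules. *)

theory Defs
  imports Main
begin

datatype form = Letter nat | And form form | Imp form form | Neg form

type_synonym sequent = "form list \<times> form"

text \<open>Derivability in NOM from a set H of premise sequents (used as extra axioms).
  A rule schema is derivable iff for every instance its conclusion is derivable
  from its premises.\<close>
inductive nom_deriv :: "sequent set \<Rightarrow> sequent \<Rightarrow> bool" for H :: "sequent set" where
  premise: "s \<in> H \<Longrightarrow> nom_deriv H s"
| assumption: "nom_deriv H (G @ [p], p)"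
| cut: "nom_deriv H (G, p) \<Longrightarrow> nom_deriv H (G @ [p], q) \<Longrightarrow> nom_deriv H (G, q)"
| paste: "nom_deriv H (G, p) \<Longrightarrow> nom_deriv H (G, q) \<Longrightarrow> nom_deriv H (G @ [p], q)"
| compat_exch: "nom_deriv H (G @ [p, q], p) \<Longrightarrow> nom_deriv H (G @ [p, q], r) \<Longrightarrow>
      nom_deriv H (G @ [q, p], q) \<Longrightarrow> nom_deriv H (G @ [q, p], r)"
| and_intro: "nom_deriv H (G, p) \<Longrightarrow> nom_deriv H (G, q) \<Longrightarrow> nom_deriv H (G, And p q)"
| and_elim1: "nom_deriv H (G, And p q) \<Longrightarrow> nom_deriv H (G, p)"
| and_elim2: "nom_deriv H (G, And p q) \<Longrightarrow> nom_deriv H (G, q)"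
| imp_intro: "nom_deriv H (G @ [p], q) \<Longrightarrow> nom_deriv H (G, Imp p q)"
| imp_elim: "nom_deriv H (G, Imp p q) \<Longrightarrow> nom_deriv H (G @ [p], q)"
| excluded_middle: "nom_deriv H (G @ [p], q) \<Longrightarrow> nom_deriv H (G @ [Neg p], q) \<Longrightarrow> nom_deriv H (G, q)"
| explosion: "nom_deriv H (G, Neg p) \<Longrightarrow> nom_deriv H (G @ [p], q)"

end

theory Submission
  imports Defs
begin

text \<open>Weakening by an arbitrary hypothesis \<open>\<not>\<phi>\<close> is not a rule of NOM, but weakening
  by \<open>\<not>\<beta>\<close> is derivable whenever \<open>\<beta>\<close> entails the succedent in every context; and two
  such negated hypotheses can be exchanged. Taking \<open>\<beta> = \<phi> \<and> \<psi>\<close>, which entails both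
  \<open>\<psi>\<close> and \<open>\<phi> \<longrightarrow> \<psi>\<close>, the premises survive under \<open>\<not>(\<phi> \<and> \<psi>)\<close>; there \<open>\<phi>\<close> would yield
  \<open>\<phi> \<and> \<psi>\<close>, so \<open>\<not>\<phi>\<close> holds and \<open>\<not>\<phi> \<longrightarrow> \<psi>\<close> follows by paste. Under \<open>\<phi> \<and> \<psi>\<close> the
  hypothesis \<open>\<not>\<phi>\<close> is contradictory, so excluded middle on \<open>\<phi> \<and> \<psi>\<close> gives
  \<open>\<Gamma> \<turnstile> \<not>\<phi> \<longrightarrow> \<psi>\<close>.\<close>

lemma nom_notnot_elim_hyp: "nom_deriv H (G @ [Neg (Neg p)], p)"
proof (rule nom_deriv.excluded_middle)
  show "nom_deriv H ((G @ [Neg (Neg p)]) @ [p], p)"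
    by (rule nom_deriv.assumption)
  show "nom_deriv H ((G @ [Neg (Neg p)]) @ [Neg p], p)"
    by (rule nom_deriv.explosion, rule nom_deriv.assumption)
qed

text \<open>The hypothesis \<open>p\<close> is not last, so the assumption rule does not apply; this is the
  third premise compatible exchange needs in order to swap \<open>p\<close> and \<open>\<not>p\<close>.\<close>

lemma nom_hyp_persists_under_neg: "nom_deriv H (G @ [p, Neg p], p)"
proof -
  let ?X = "Imp p (Imp (Neg p) p)"
  have absurd: "nom_deriv H (G @ [Neg p, p], q)" for q
    using nom_deriv.explosion[OF nom_deriv.assumption[of H G "Neg p"]] by simp
  have "nom_deriv H ((G @ [Neg p, p]) @ [Neg p], p)"
    by (rule nom_deriv.explosion, rule absurd)
  then have "nom_deriv H (G @ [Neg p], ?X)"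
    by (intro nom_deriv.imp_intro) simp
  moreover have "nom_deriv H (G @ [Neg (Neg p)], ?X)"
  proof (rule nom_deriv.imp_intro, rule nom_deriv.paste)
    show "nom_deriv H (G @ [Neg (Neg p)], p)"
      by (rule nom_notnot_elim_hyp)
    show "nom_deriv H (G @ [Neg (Neg p)], Imp (Neg p) p)"
      by (rule nom_deriv.imp_intro, rule nom_deriv.explosion, rule nom_deriv.assumption)
  qed
  ultimately have "nom_deriv H (G, ?X)"
    by (rule nom_deriv.excluded_middle)
  then have "nom_deriv H (G @ [p], Imp (Neg p) p)"
    by (rule nom_deriv.imp_elim)
  then show ?thesis
    using nom_deriv.imp_elim by fastforce
qed

lemma nom_contradictory_hyps: "nom_deriv H (G @ [p, Neg p], r)"
proof -
  have absurd: "nom_deriv H (G @ [Neg p, p], q)" for q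
    using nom_deriv.explosion[OF nom_deriv.assumption[of H G "Neg p"]] by simp
  show ?thesis
    by (rule nom_deriv.compat_exch[OF absurd absurd nom_hyp_persists_under_neg])
qed

lemma nom_notnotI:
  assumes "nom_deriv H (G, p)"
  shows "nom_deriv H (G, Neg (Neg p))"
proof (rule nom_deriv.cut[OF assms], rule nom_deriv.excluded_middle)
  show "nom_deriv H ((G @ [p]) @ [Neg p], Neg (Neg p))"
    using nom_contradictory_hyps by simp
  show "nom_deriv H ((G @ [p]) @ [Neg (Neg p)], Neg (Neg p))"
    by (rule nom_deriv.assumption)
qed

lemma nom_refuted_hyp:
  assumes "nom_deriv H (G, p)"
  shows "nom_deriv H (G @ [Neg p], q)"
  by (rule nom_deriv.explosion, rule nom_notnotI[OF assms])

lemma nom_modus_tollens: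
  assumes neg: "nom_deriv H (G, Neg a)" and imp: "nom_deriv H (G @ [b], a)"
  shows "nom_deriv H (G, Neg b)"
proof (rule nom_deriv.excluded_middle)
  have absurd: "nom_deriv H (G @ [a, b], q)" for q
    using nom_deriv.explosion[OF nom_deriv.explosion[OF neg]] by simp
  have "nom_deriv H (G @ [b, a], b)"
    using nom_deriv.paste[OF imp nom_deriv.assumption[of H G b]] by simp
  then have "nom_deriv H (G @ [b, a], Neg b)"
    by (rule nom_deriv.compat_exch[OF absurd absurd])
  then show "nom_deriv H (G @ [b], Neg b)"
    using nom_deriv.cut[OF imp] by simp
  show "nom_deriv H (G @ [Neg b], Neg b)"
    by (rule nom_deriv.assumption)
qed

lemma nom_exchange_neg_hyps:
  assumes entails: "\<And>G'. nom_deriv H (G' @ [b], a)"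
    and "nom_deriv H (G @ [Neg a, Neg b], r)"
  shows "nom_deriv H (G @ [Neg b, Neg a], r)"
proof (rule nom_deriv.compat_exch)
  have "nom_deriv H (G @ [Neg a], Neg b)"
    by (rule nom_modus_tollens[OF nom_deriv.assumption entails])
  then show "nom_deriv H (G @ [Neg a, Neg b], Neg a)"
    using nom_deriv.paste[OF _ nom_deriv.assumption[of H G "Neg a"]] by simp
  have "nom_deriv H (G @ [Neg b, Neg a], Neg a)"
    using nom_deriv.assumption[of H "G @ [Neg b]" "Neg a"] by simp
  then show "nom_deriv H (G @ [Neg b, Neg a], Neg b)"
    by (rule nom_modus_tollens[OF _ entails])
qed fact

lemma nom_weaken_neg_hyp:
  assumes entails: "\<And>G'. nom_deriv H (G' @ [b], a)"
    and "nom_deriv H (G, a)"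
  shows "nom_deriv H (G @ [Neg b], a)"
proof (rule nom_deriv.excluded_middle)
  show "nom_deriv H ((G @ [Neg b]) @ [a], a)"
    by (rule nom_deriv.assumption)
  have "nom_deriv H ((G @ [Neg a]) @ [Neg b], a)"
    by (rule nom_deriv.explosion, rule nom_refuted_hyp[OF \<open>nom_deriv H (G, a)\<close>])
  then show "nom_deriv H ((G @ [Neg b]) @ [Neg a], a)"
    using nom_exchange_neg_hyps[OF entails] by simp
qed

lemma nom_imp_neg_under_neg_conj:
  assumes "nom_deriv H (G, \<psi>)" and "nom_deriv H (G @ [\<phi>], \<psi>)"
  shows "nom_deriv H (G @ [Neg (And \<phi> \<psi>)], Imp (Neg \<phi>) \<psi>)"
proof -
  let ?G = "G @ [Neg (And \<phi> \<psi>)]"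
  have conj_left: "nom_deriv H (G' @ [And \<phi> \<psi>], \<phi>)" for G'
    by (rule nom_deriv.and_elim1, rule nom_deriv.assumption)
  have conj_right: "nom_deriv H (G' @ [And \<phi> \<psi>], \<psi>)" for G'
    by (rule nom_deriv.and_elim2, rule nom_deriv.assumption)
  have conj_imp: "nom_deriv H (G' @ [And \<phi> \<psi>], Imp \<phi> \<psi>)" for G'
    by (rule nom_deriv.imp_intro, rule nom_deriv.paste[OF conj_left conj_right])
  have psi: "nom_deriv H (?G, \<psi>)"
    by (rule nom_weaken_neg_hyp[OF conj_right assms(1)])
  have "nom_deriv H (?G, Imp \<phi> \<psi>)"
    by (rule nom_weaken_neg_hyp[OF conj_imp nom_deriv.imp_intro[OF assms(2)]])
  then have "nom_deriv H (?G @ [\<phi>], And \<phi> \<psi>)"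
    by (rule nom_deriv.and_intro[OF nom_deriv.assumption nom_deriv.imp_elim])
  then have "nom_deriv H (?G, Neg \<phi>)"
    by (rule nom_modus_tollens[OF nom_deriv.assumption])
  then show ?thesis
    by (rule nom_deriv.imp_intro[OF nom_deriv.paste[OF _ psi]])
qed

lemma nom_neg_hyp_intro:
  assumes "nom_deriv H (G, \<psi>)" and "nom_deriv H (G @ [\<phi>], \<psi>)"
  shows "nom_deriv H (G @ [Neg \<phi>], \<psi>)"
proof -
  have "nom_deriv H ((G @ [And \<phi> \<psi>]) @ [Neg \<phi>], \<psi>)"
    by (rule nom_refuted_hyp, rule nom_deriv.and_elim1, rule nom_deriv.assumption)
  then have "nom_deriv H (G @ [And \<phi> \<psi>], Imp (Neg \<phi>) \<psi>)"
    by (rule nom_deriv.imp_intro)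
  then have "nom_deriv H (G, Imp (Neg \<phi>) \<psi>)"
    by (rule nom_deriv.excluded_middle[OF _ nom_imp_neg_under_neg_conj[OF assms]])
  then show ?thesis
    by (rule nom_deriv.imp_elim)
qed

theorem theorem4p4:
  fixes \<Gamma> :: "form list" and \<phi> \<psi> :: form
  shows "nom_deriv {(\<Gamma>, \<psi>), (\<Gamma> @ [\<phi>], \<psi>)} (\<Gamma> @ [Neg \<phi>], \<psi>)"
  by (intro nom_neg_hyp_intro nom_deriv.premise) simp_all

end
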